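(* Let $f:\Omega^\infty\to\Omega$ be a finitary Boolean function. Then almost surely the pivotal set $\mathcal{P}(f)(\omega)$ is finite. If in addition $f$ is $1$-knowable, then the total influence is finite: $I(f)=\sum_{k\ge1} I_k(f)<\infty$.
   Context: Let $\Omega=\{-1,1\}$ and $\Omega^\infty=\{-1,1\}^{\mathbb N}$ with the uniform product probability measure; $\omega=(\omega_1,\omega_2,\dots)$ denotes a uniformly random element. A Boolean function is a (measurable) map $f:\Omega^\infty\to\Omega$. For $k\in\mathbb N$, $\omega^{(k)}$ denotes $\omega$ with bit $k$ flipped. The pivotal set is $\mathcal{P}(f)(\omega)=\{i\in\mathbb N: f(\omega^{(i)})\neq f(\omega)\}$; the influence of bit $k$ is $I_k(f)=\mathbb P(k\in\mathcal P(f)(\omega))$ and the total influence is $I(f)=\sum_k I_k(f)$. A set $W\subseteq\mathbb N$ is a witness set for $f$ at $\omega$ if there is an event $A$ with $\mathbb P(A)=1$ such that for all $\tilde\omega\in A$: if $\tilde\omega_i=\omega_i$ for all $i\in W$ then $f(\tilde\omega)=f(\omega)$. $f$ is finitary if almost surely there exists a finite witness set; then $W=W(f)(\omega)$ denotes the least finite witness set in the order: smaller maximum first, then smaller cardinality, then lexicographic. $f$ is $p$-knowable ($p>0$) if it is finitary and $\mathbb E[(\max W)^p]<\infty$. *)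

theory Defs
  imports "HOL-Probability.Probability"
begin

text \<open>The sign set Omega = {-1,1}; bits are indexed by nat (index i here is bit i+1 of the paper).\<close>
definition Sgn :: "int set" where "Sgn = {-1, 1}"

definition Cube :: "(nat \<Rightarrow> int) measure" where
  "Cube = (\<Pi>\<^sub>M i\<in>(UNIV::nat set). uniform_count_measure Sgn)"

definition boolean_function :: "((nat \<Rightarrow> int) \<Rightarrow> int) \<Rightarrow> bool" where
  "boolean_function f \<longleftrightarrow> f \<in> Cube \<rightarrow>\<^sub>M count_space Sgn"

definition flip :: "nat \<Rightarrow> (nat \<Rightarrow> int) \<Rightarrow> (nat \<Rightarrow> int)" where
  "flip k x = x(k := -(x k))"

definition pivotal :: "((nat \<Rightarrow> int) \<Rightarrow> int) \<Rightarrow> (nat \<Rightarrow> int) \<Rightarrow> nat set" where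
  "pivotal f x = {i. f (flip i x) \<noteq> f x}"

definition influence :: "((nat \<Rightarrow> int) \<Rightarrow> int) \<Rightarrow> nat \<Rightarrow> real" where
  "influence f k = measure Cube {x \<in> space Cube. k \<in> pivotal f x}"

definition total_influence :: "((nat \<Rightarrow> int) \<Rightarrow> int) \<Rightarrow> real" where
  "total_influence f = (\<Sum>k. influence f k)"

definition witness :: "((nat \<Rightarrow> int) \<Rightarrow> int) \<Rightarrow> nat set \<Rightarrow> (nat \<Rightarrow> int) \<Rightarrow> bool" where
  "witness f W x \<longleftrightarrow> (\<exists>A \<in> sets Cube. emeasure Cube A = 1 \<and>
      (\<forall>y \<in> A. (\<forall>i \<in> W. y i = x i) \<longrightarrow> f y = f x))"

definition finitary :: "((nat \<Rightarrow> int) \<Rightarrow> int) \<Rightarrow> bool" where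
  "finitary f \<longleftrightarrow> (AE x in Cube. \<exists>W. finite W \<and> witness f W x)"

text \<open>Maximum of a finite index set in the paper's 1-based indexing (max of the empty set = 0).\<close>
definition wmax :: "nat set \<Rightarrow> nat" where
  "wmax W = (if W = {} then 0 else Max W + 1)"

definition wkey_le :: "nat set \<Rightarrow> nat set \<Rightarrow> bool" where
  "wkey_le W V \<longleftrightarrow> wmax W < wmax V \<or> (wmax W = wmax V \<and> (card W < card V \<or>
     (card W = card V \<and> (sorted_list_of_set W = sorted_list_of_set V \<or>
        (sorted_list_of_set W, sorted_list_of_set V) \<in> lexord {(a, b). a < b}))))"

definition least_witness :: "((nat \<Rightarrow> int) \<Rightarrow> int) \<Rightarrow> (nat \<Rightarrow> int) \<Rightarrow> nat set" where
  "least_witness f x = (THE W. finite W \<and> witness f W x \<and>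
      (\<forall>V. finite V \<and> witness f V x \<longrightarrow> wkey_le W V))"

definition knowable :: "real \<Rightarrow> ((nat \<Rightarrow> int) \<Rightarrow> int) \<Rightarrow> bool" where
  "knowable p f \<longleftrightarrow> finitary f \<and>
     (\<integral>\<^sup>+ x. ennreal (real (wmax (least_witness f x)) powr p) \<partial>Cube) < \<infinity>"

end

theory Submission
  imports Defs "HOL-Library.List_Lexorder"
begin

text \<open>
  Flipping a bit preserves the uniform measure. Fix, for each of the countably many finite
  patterns of bit values, one point with that pattern at which the positions of the pattern
  form a witness; then almost every point carrying the pattern has the same value of \<open>f\<close> as
  the representative, and since flipping preserves null sets, the same holds simultaneously
  for all flips of almost every point. So if \<open>W\<close> is a finite witness at such a point and
  \<open>k \<notin> W\<close>, the point and its \<open>k\<close>-flip carry the same pattern on \<open>W\<close> and \<open>k\<close> is not pivotal: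
  the pivotal set lies inside every finite witness set. In particular it lies inside
  \<open>{..<max W}\<close> for the least witness \<open>W\<close>, and summing the influences gives
  \<open>\<Sum>\<^sub>k I\<^sub>k(f) = E |pivotal f| \<le> E[max W] < \<infinity>\<close>.
\<close>

lemma measurable_PiM_coordinatewise:
  assumes "\<And>i. i \<in> I \<Longrightarrow> g i \<in> M i \<rightarrow>\<^sub>M N i"
  shows "(\<lambda>x. \<lambda>i\<in>I. g i (x i)) \<in> Pi\<^sub>M I M \<rightarrow>\<^sub>M Pi\<^sub>M I N"
  using assms by (intro measurable_restrict measurable_compose[OF measurable_component_singleton]) auto

lemma distr_PiM_coordinatewise:
  assumes M: "\<And>i. i \<in> I \<Longrightarrow> prob_space (M i)"
    and g: "\<And>i. i \<in> I \<Longrightarrow> g i \<in> M i \<rightarrow>\<^sub>M M i"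
    and preserving: "\<And>i. i \<in> I \<Longrightarrow> distr (M i) (M i) (g i) = M i"
  shows "distr (Pi\<^sub>M I M) (Pi\<^sub>M I M) (\<lambda>x. \<lambda>i\<in>I. g i (x i)) = Pi\<^sub>M I M"
    (is "distr ?P ?P ?G = ?P")
proof (rule measure_eqI_PiM_infinite[symmetric, OF refl])
  interpret prob_space ?P using M by (rule prob_space_PiM)
  show "finite_measure ?P" by unfold_locales
  have G: "?G \<in> ?P \<rightarrow>\<^sub>M ?P"
    using g by (rule measurable_PiM_coordinatewise)
  show "sets (distr ?P ?P ?G) = sets ?P" by simp
  fix A J assume J: "finite J" "J \<subseteq> I" and A: "\<And>i. i \<in> J \<Longrightarrow> A i \<in> sets (M i)"
  define B where "B i = g i -` A i \<inter> space (M i)" for i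
  have B: "B i \<in> sets (M i)" if "i \<in> J" for i
    using measurable_sets[OF g A] that J unfolding B_def by blast
  have "?G -` prod_emb I M J (Pi\<^sub>E J A) \<inter> space ?P = prod_emb I M J (Pi\<^sub>E J B)"
    using J g[THEN measurable_space] by (auto simp: prod_emb_def space_PiM B_def Pi_iff PiE_iff subset_eq)
  then have "distr ?P ?P ?G (prod_emb I M J (Pi\<^sub>E J A)) = ?P (prod_emb I M J (Pi\<^sub>E J B))"
    using J A by (simp add: emeasure_distr[OF G] sets_PiM_I)
  also have "\<dots> = (\<Prod>i\<in>J. M i (B i))"
    using J B M by (intro emeasure_PiM_emb) auto
  also have "\<dots> = (\<Prod>i\<in>J. M i (A i))"
    using J A by (intro prod.cong) (auto simp: B_def emeasure_distr[OF g, symmetric] preserving)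
  also have "\<dots> = ?P (prod_emb I M J (Pi\<^sub>E J A))"
    using J A M by (intro emeasure_PiM_emb[symmetric]) auto
  finally show "?P (prod_emb I M J (Pi\<^sub>E J A)) = distr ?P ?P ?G (prod_emb I M J (Pi\<^sub>E J A))" ..
qed

lemma measurable_bij_uniform_count_measure:
  "bij_betw g A A \<Longrightarrow> g \<in> uniform_count_measure A \<rightarrow>\<^sub>M uniform_count_measure A"
  by (auto simp: measurable_def sets_uniform_count_measure space_uniform_count_measure bij_betw_def)

lemma distr_uniform_count_measure_bij:
  assumes "finite A" "bij_betw g A A"
  shows "distr (uniform_count_measure A) (uniform_count_measure A) g = uniform_count_measure A"
proof (rule measure_eqI)
  have g: "g \<in> uniform_count_measure A \<rightarrow>\<^sub>M uniform_count_measure A"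
    using assms(2) by (rule measurable_bij_uniform_count_measure)
  fix X assume "X \<in> sets (distr (uniform_count_measure A) (uniform_count_measure A) g)"
  then have X: "X \<subseteq> A" by (simp add: sets_uniform_count_measure)
  have "g ` (g -` X \<inter> A) = X"
  proof (intro equalityI subsetI)
    fix y assume "y \<in> X"
    then obtain a where "a \<in> A" "y = g a"
      using X bij_betw_imp_surj_on[OF assms(2)] by blast
    with \<open>y \<in> X\<close> show "y \<in> g ` (g -` X \<inter> A)" by blast
  qed auto
  then have "bij_betw g (g -` X \<inter> A) X"
    by (intro bij_betw_subset[OF assms(2)]) auto
  then have "card (g -` X \<inter> A) = card X"
    by (rule bij_betw_same_card)
  then show "emeasure (distr (uniform_count_measure A) (uniform_count_measure A) g) X
      = emeasure (uniform_count_measure A) X"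
    using X assms by (simp add: emeasure_distr[OF g] space_uniform_count_measure
        emeasure_uniform_count_measure finite_subset sets_uniform_count_measure)
qed simp

lemma prob_space_Cube: "prob_space Cube"
  unfolding Cube_def by (intro prob_space_PiM prob_space_uniform_count_measure) (auto simp: Sgn_def)

lemma flip_coordinatewise:
  "flip k = (\<lambda>x. \<lambda>i\<in>UNIV. (if i = k then uminus else id) (x i))"
  by (auto simp: flip_def fun_eq_iff)

lemma bij_betw_uminus_Sgn: "bij_betw uminus Sgn Sgn"
  by (auto simp: Sgn_def bij_betw_def)

lemma measurable_flip: "flip k \<in> Cube \<rightarrow>\<^sub>M Cube"
  unfolding flip_coordinatewise Cube_def
  by (intro measurable_PiM_coordinatewise measurable_bij_uniform_count_measure)
    (auto simp: bij_betw_uminus_Sgn)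

lemma distr_Cube_flip: "distr Cube Cube (flip k) = Cube"
  unfolding flip_coordinatewise Cube_def
  by (intro distr_PiM_coordinatewise prob_space_uniform_count_measure distr_uniform_count_measure_bij
      measurable_bij_uniform_count_measure) (auto simp: bij_betw_uminus_Sgn, auto simp: Sgn_def)

lemma AE_Cube_flip:
  assumes "AE x in Cube. P x" shows "AE x in Cube. P (flip k x)"
proof (rule AE_distrD[OF measurable_flip])
  show "AE x in distr Cube Cube (flip k). P x"
    unfolding distr_Cube_flip by (rule assms)
qed

lemma AE_Cube_witness:
  assumes "witness f W z"
  shows "AE x in Cube. (\<forall>i\<in>W. x i = z i) \<longrightarrow> f x = f z"
proof -
  obtain A where A: "A \<in> sets Cube" "emeasure Cube A = 1"
    and eq: "\<And>x. x \<in> A \<Longrightarrow> (\<forall>i\<in>W. x i = z i) \<Longrightarrow> f x = f z"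
    using assms unfolding witness_def by blast
  have "AE x in Cube. x \<in> A"
    using prob_space.AE_in_set_eq_1[OF prob_space_Cube A(1)] A(2) by (simp add: measure_def)
  then show ?thesis
    by eventually_elim (rule impI, rule eq)
qed

definition matches :: "(nat \<times> int) list \<Rightarrow> (nat \<Rightarrow> int) \<Rightarrow> bool" where
  "matches p x \<longleftrightarrow> (\<forall>(i, v)\<in>set p. x i = v)"

definition witnessed_pattern :: "((nat \<Rightarrow> int) \<Rightarrow> int) \<Rightarrow> (nat \<times> int) list \<Rightarrow> (nat \<Rightarrow> int) \<Rightarrow> bool" where
  "witnessed_pattern f p z \<longleftrightarrow> matches p z \<and> witness f (fst ` set p) z"

definition pattern_rep :: "((nat \<Rightarrow> int) \<Rightarrow> int) \<Rightarrow> (nat \<times> int) list \<Rightarrow> (nat \<Rightarrow> int)" where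
  "pattern_rep f p = (SOME z. witnessed_pattern f p z)"

lemma AE_Cube_eq_pattern_rep:
  "AE x in Cube. \<forall>p. matches p x \<and> (\<exists>z. witnessed_pattern f p z) \<longrightarrow> f x = f (pattern_rep f p)"
proof (subst AE_all_countable, intro allI)
  fix p
  show "AE x in Cube. matches p x \<and> (\<exists>z. witnessed_pattern f p z) \<longrightarrow> f x = f (pattern_rep f p)"
  proof (cases "(\<exists>z. witnessed_pattern f p z)")
    case True
    define z where "z = pattern_rep f p"
    have z: "matches p z" "witness f (fst ` set p) z"
      using someI_ex[OF True] unfolding z_def pattern_rep_def witnessed_pattern_def by auto
    have "matches p x \<Longrightarrow> \<forall>i\<in>fst ` set p. x i = z i" for x
      using z(1) unfolding matches_def by fastforce
    with AE_Cube_witness[OF z(2)] show ?thesis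
      unfolding z_def[symmetric] by (auto elim: eventually_mono)
  qed simp
qed

lemma AE_pivotal_subset_witness:
  "AE x in Cube. \<forall>W. finite W \<and> witness f W x \<longrightarrow> pivotal f x \<subseteq> W"
proof -
  have "AE x in Cube. \<forall>p. matches p x \<and> (\<exists>z. witnessed_pattern f p z) \<longrightarrow> f x = f (pattern_rep f p)"
    by (rule AE_Cube_eq_pattern_rep)
  moreover have "AE x in Cube. \<forall>k p. matches p (flip k x) \<and> (\<exists>z. witnessed_pattern f p z)
      \<longrightarrow> f (flip k x) = f (pattern_rep f p)"
    by (subst AE_all_countable) (intro allI AE_Cube_flip AE_Cube_eq_pattern_rep)
  ultimately show ?thesis
  proof eventually_elim
    case (elim x)
    show ?case
    proof (intro allI impI subsetI)
      fix W k assume W: "finite W \<and> witness f W x" and k: "k \<in> pivotal f x"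
      show "k \<in> W"
      proof (rule ccontr)
        assume "k \<notin> W"
        define p where "p = map (\<lambda>i. (i, x i)) (sorted_list_of_set W)"
        have set_p: "set p = (\<lambda>i. (i, x i)) ` W" using W by (simp add: p_def)
        have "matches p x" "matches p (flip k x)"
          using \<open>k \<notin> W\<close> by (auto simp: matches_def set_p flip_def)
        moreover have "witnessed_pattern f p x"
          using W \<open>matches p x\<close> by (simp add: witnessed_pattern_def set_p image_image)
        ultimately have "f x = f (flip k x)" using elim by (metis (full_types))
        then show False using k by (simp add: pivotal_def)
      qed
    qed
  qed
qed

lemma AE_finite_pivotal:
  assumes "finitary f" shows "AE x in Cube. finite (pivotal f x)"
  using AE_pivotal_subset_witness[of f] assms unfolding finitary_def
  by eventually_elim (auto intro: finite_subset)

definition wkey :: "nat set \<Rightarrow> nat list" where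
  "wkey W = wmax W # card W # sorted_list_of_set W"

lemma wkey_le_iff_wkey: "wkey_le W V \<longleftrightarrow> wkey W \<le> wkey V"
  by (auto simp: wkey_le_def wkey_def list_le_def list_less_def)

lemma inj_on_wkey: "inj_on wkey {W. finite W}"
  by (auto simp: inj_on_def wkey_def sorted_list_of_set_inject)

lemma subset_lessThan_iff_wmax_le: "finite W \<Longrightarrow> W \<subseteq> {..<n} \<longleftrightarrow> wmax W \<le> n"
  by (cases "W = {}") (auto simp: wmax_def less_Suc_eq_le Suc_le_eq)

lemma ex1_wkey_le_least:
  assumes "finite W0" "Q W0"
  shows "\<exists>!W. finite W \<and> Q W \<and> (\<forall>V. finite V \<and> Q V \<longrightarrow> wkey_le W V)"
proof -
  define S where "S = {W. finite W \<and> Q W \<and> wmax W \<le> wmax W0}"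
  have "S \<subseteq> Pow {..<wmax W0}"
    using subset_lessThan_iff_wmax_le by (auto simp: S_def)
  then have "finite S" by (rule finite_subset) simp
  moreover have "W0 \<in> S" using assms by (simp add: S_def)
  ultimately have "Min (wkey ` S) \<in> wkey ` S" by (intro Min_in) auto
  then obtain W where W: "W \<in> S" "wkey W = Min (wkey ` S)" by auto
  have least: "wkey_le W V" if "finite V" "Q V" for V
  proof (cases "V \<in> S")
    case True
    then show ?thesis using \<open>finite S\<close> by (simp add: wkey_le_iff_wkey W(2))
  next
    case False
    then show ?thesis using that W(1) by (simp add: S_def wkey_le_def)
  qed
  show ?thesis
  proof (rule ex1I[of _ W])
    show "finite W \<and> Q W \<and> (\<forall>V. finite V \<and> Q V \<longrightarrow> wkey_le W V)"
      using W(1) least by (simp add: S_def)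
    fix W' assume W': "finite W' \<and> Q W' \<and> (\<forall>V. finite V \<and> Q V \<longrightarrow> wkey_le W' V)"
    then have "wkey W' = wkey W"
      using least[of W'] W(1) by (auto simp: S_def wkey_le_iff_wkey intro: antisym)
    then show "W' = W"
      using W' W(1) inj_on_wkey by (auto simp: S_def dest: inj_onD)
  qed
qed

lemma finite_witness_least_witness:
  assumes "finite W" "witness f W x"
  shows "finite (least_witness f x)" "witness f (least_witness f x) x"
  using theI'[OF ex1_wkey_le_least[of W "\<lambda>W. witness f W x", OF assms]]
  unfolding least_witness_def by blast+

lemma AE_pivotal_subset_lessThan_wmax:
  assumes "finitary f"
  shows "AE x in Cube. pivotal f x \<subseteq> {..<wmax (least_witness f x)}"
  using AE_pivotal_subset_witness[of f] assms unfolding finitary_def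
proof eventually_elim
  case (elim x)
  then obtain W where "finite W" "witness f W x" by blast
  then have "finite (least_witness f x)" "witness f (least_witness f x) x"
    by (rule finite_witness_least_witness)+
  moreover from this(1) have "least_witness f x \<subseteq> {..<wmax (least_witness f x)}"
    by (simp add: subset_lessThan_iff_wmax_le)
  ultimately show ?case
    using elim(1) by blast
qed

lemma sets_pivotal:
  assumes "boolean_function f"
  shows "{x \<in> space Cube. k \<in> pivotal f x} \<in> sets Cube"
proof -
  have "f \<in> Cube \<rightarrow>\<^sub>M count_space UNIV"
    using measurable_compose[OF assms[unfolded boolean_function_def], of "\<lambda>y. y" "count_space UNIV"]
    by simp
  note [measurable] = this measurable_flip
  show ?thesis unfolding pivotal_def by measurable
qed

lemma suminf_influence_eq_nn_integral_pivotal: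
  assumes "boolean_function f"
  shows "(\<Sum>k. ennreal (influence f k)) = (\<integral>\<^sup>+ x. emeasure (count_space UNIV) (pivotal f x) \<partial>Cube)"
proof -
  let ?P = "\<lambda>k. {x \<in> space Cube. k \<in> pivotal f x}"
  have "ennreal (influence f k) = emeasure Cube (?P k)" for k
    using prob_space_Cube by (simp add: prob_space_def finite_measure.emeasure_eq_measure influence_def)
  then have "(\<Sum>k. ennreal (influence f k)) = (\<Sum>k. \<integral>\<^sup>+ x. indicator (?P k) x \<partial>Cube)"
    using sets_pivotal[OF assms] by simp
  also have "\<dots> = (\<integral>\<^sup>+ x. (\<Sum>k. indicator (?P k) x) \<partial>Cube)"
    using sets_pivotal[OF assms] by (intro nn_integral_suminf[symmetric]) simp
  also have "\<dots> = (\<integral>\<^sup>+ x. emeasure (count_space UNIV) (pivotal f x) \<partial>Cube)"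
  proof (rule nn_integral_cong)
    fix x assume "x \<in> space Cube"
    then have "(\<Sum>k. indicator (?P k) x) = (\<integral>\<^sup>+ k. indicator (pivotal f x) k \<partial>count_space UNIV)"
      by (simp add: nn_integral_count_space_nat indicator_def)
    then show "(\<Sum>k. indicator (?P k) x) = emeasure (count_space UNIV) (pivotal f x)"
      by simp
  qed
  finally show ?thesis .
qed

lemma summable_influence_if_knowable:
  assumes "boolean_function f" "knowable 1 f"
  shows "summable (influence f)"
proof (rule summable_suminf_not_top)
  have "finitary f" using assms(2) by (simp add: knowable_def)
  have "AE x in Cube. emeasure (count_space UNIV) (pivotal f x)
      \<le> ennreal (real (wmax (least_witness f x)) powr 1)"
    using AE_pivotal_subset_lessThan_wmax[OF \<open>finitary f\<close>]
  proof eventually_elim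
    case (elim x)
    then have "emeasure (count_space UNIV) (pivotal f x) \<le> emeasure (count_space UNIV) {..<wmax (least_witness f x)}"
      by (intro emeasure_mono) auto
    then show ?case by (simp add: ennreal_of_nat_eq_real_of_nat)
  qed
  then have "(\<Sum>k. ennreal (influence f k)) \<le> (\<integral>\<^sup>+ x. ennreal (real (wmax (least_witness f x)) powr 1) \<partial>Cube)"
    unfolding suminf_influence_eq_nn_integral_pivotal[OF assms(1)] by (rule nn_integral_mono_AE)
  also have "\<dots> < \<infinity>"
    using assms(2) by (simp add: knowable_def)
  finally show "(\<Sum>k. ennreal (influence f k)) \<noteq> \<top>" by simp
qed (simp add: influence_def)

theorem mainTheorem1:
  fixes f :: "(nat \<Rightarrow> int) \<Rightarrow> int"
  assumes "boolean_function f" and "finitary f"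
  shows "(AE x in Cube. finite (pivotal f x))
    \<and> (knowable 1 f \<longrightarrow> summable (\<lambda>k. influence f k))"
  using AE_finite_pivotal[OF assms(2)] summable_influence_if_knowable[OF assms(1)] by blast

end
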